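(* Let $R$ be a commutative ring and $S$ a multiplicative subset of $R$ consisting of non-zero-divisors. If $R$ is a $u$-$S$-Artinian ring, then $R$ is an Artinian ring.
   Context: An $R$-module $M$ is $u$-$S$-Artinian (with respect to $s$) if there exists $s\in S$ such that for every descending chain $M_1\supseteq M_2\supseteq\cdots$ of submodules of $M$ there is $k\ge1$ with $sM_k\subseteq M_n$ for all $n\ge k$. $R$ is a $u$-$S$-Artinian ring if it is $u$-$S$-Artinian as an $R$-module. *)

theory Defs
  imports Main "HOL.Modules"
begin

abbreviation submodule_self :: "'a::comm_ring_1 set \<Rightarrow> bool" where
  "submodule_self I \<equiv> module.subspace ((*)) I"

definition multiplicative_subset :: "'a::comm_ring_1 set \<Rightarrow> bool" where
  "multiplicative_subset S \<longleftrightarrow> 1 \<in> S \<and> (\<forall>s\<in>S. \<forall>t\<in>S. s * t \<in> S)"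

definition non_zero_divisor :: "'a::comm_ring_1 \<Rightarrow> bool" where
  "non_zero_divisor s \<longleftrightarrow> (\<forall>x. s * x = 0 \<longrightarrow> x = 0)"

definition u_S_Artinian_ring :: "'a::comm_ring_1 set \<Rightarrow> bool" where
  "u_S_Artinian_ring S \<longleftrightarrow>
     (\<exists>s\<in>S. \<forall>M :: nat \<Rightarrow> 'a set.
        (\<forall>n. submodule_self (M n)) \<and> (\<forall>n. M (Suc n) \<subseteq> M n) \<longrightarrow>
        (\<exists>k. \<forall>n\<ge>k. (\<lambda>x. s * x) ` M k \<subseteq> M n))"

definition Artinian_ring :: "'a::comm_ring_1 itself \<Rightarrow> bool" where
  "Artinian_ring _ \<longleftrightarrow>
     (\<forall>M :: nat \<Rightarrow> 'a set.
        (\<forall>n. submodule_self (M n)) \<and> (\<forall>n. M (Suc n) \<subseteq> M n) \<longrightarrow>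
        (\<exists>k. \<forall>n\<ge>k. M n = M k))"

end

(* Applied to the chain of principal ideals s R \<supseteq> s^2 R \<supseteq> ..., the condition yields
   s^(k+1) \<in> s^(k+2) R; cancelling the non-zero-divisor s^(k+1) shows that s is a unit.
   For a unit s the inclusion s M_k \<subseteq> M_n already means M_k \<subseteq> M_n, so every
   descending chain of ideals is stationary. *)
theory Submission
  imports Defs
begin

definition u_Artinian_wrt :: "'a::comm_ring_1 \<Rightarrow> bool" where
  "u_Artinian_wrt s \<longleftrightarrow>
     (\<forall>M :: nat \<Rightarrow> 'a set.
        (\<forall>n. submodule_self (M n)) \<and> (\<forall>n. M (Suc n) \<subseteq> M n) \<longrightarrow>
        (\<exists>k. \<forall>n\<ge>k. (\<lambda>x. s * x) ` M k \<subseteq> M n))"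

lemma u_S_Artinian_ring_iff: "u_S_Artinian_ring S \<longleftrightarrow> (\<exists>s\<in>S. u_Artinian_wrt s)"
  unfolding u_S_Artinian_ring_def u_Artinian_wrt_def ..

lemma module_mult_self: "module ((*) :: 'a::comm_ring_1 \<Rightarrow> 'a \<Rightarrow> 'a)"
  by unfold_locales (auto simp: algebra_simps)

lemma submodule_self_iff:
  "submodule_self (I :: 'a::comm_ring_1 set) \<longleftrightarrow>
     0 \<in> I \<and> (\<forall>x\<in>I. \<forall>y\<in>I. x + y \<in> I) \<and> (\<forall>c. \<forall>x\<in>I. c * x \<in> I)"
  by (rule module.subspace_def[OF module_mult_self])

lemma submodule_self_principal: "submodule_self (range ((*) (a :: 'a::comm_ring_1)))"
  unfolding submodule_self_iff
proof (intro conjI ballI allI)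
  show "0 \<in> range ((*) a)"
    by (rule range_eqI[of _ _ 0]) simp
next
  fix x y assume "x \<in> range ((*) a)" "y \<in> range ((*) a)"
  then obtain b c where "x = a * b" "y = a * c" by blast
  then have "x + y = a * (b + c)" by (simp add: distrib_left)
  then show "x + y \<in> range ((*) a)" by (rule range_eqI)
next
  fix c x assume "x \<in> range ((*) a)"
  then obtain b where "x = a * b" by blast
  then have "c * x = a * (c * b)" by (simp add: mult.left_commute)
  then show "c * x \<in> range ((*) a)" by (rule range_eqI)
qed

lemma principal_power_Suc_subset:
  "range ((*) ((s :: 'a::comm_ring_1) ^ Suc n)) \<subseteq> range ((*) (s ^ n))"
proof
  fix y assume "y \<in> range ((*) (s ^ Suc n))"
  then obtain b where "y = s ^ Suc n * b" by blast
  then have "y = s ^ n * (s * b)" by (simp add: mult_ac)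
  then show "y \<in> range ((*) (s ^ n))" by (rule range_eqI)
qed

lemma non_zero_divisor_power:
  assumes "non_zero_divisor (s :: 'a::comm_ring_1)"
  shows "non_zero_divisor (s ^ n)"
proof (induction n)
  case 0
  show ?case by (simp add: non_zero_divisor_def)
next
  case (Suc n)
  show ?case
    unfolding non_zero_divisor_def
  proof (intro allI impI)
    fix x assume "s ^ Suc n * x = 0"
    then have "s * (s ^ n * x) = 0" by (simp add: mult.assoc)
    then have "s ^ n * x = 0" using assms by (simp add: non_zero_divisor_def)
    then show "x = 0" using Suc.IH by (simp add: non_zero_divisor_def)
  qed
qed

lemma non_zero_divisor_power_dvd_imp_unit:
  assumes "non_zero_divisor (s :: 'a::comm_ring_1)" and "s ^ Suc (Suc k) dvd s ^ Suc k"
  shows "s dvd 1"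
proof -
  obtain r where r: "s ^ Suc k = s ^ Suc (Suc k) * r"
    using assms(2) by (rule dvdE)
  have "s ^ Suc k * (1 - s * r) = s ^ Suc k - s ^ Suc (Suc k) * r"
    by (simp add: right_diff_distrib mult_ac)
  also have "\<dots> = 0"
    by (simp only: r diff_self)
  finally have "s ^ Suc k * (1 - s * r) = 0" .
  then have "1 - s * r = 0"
    using non_zero_divisor_power[OF assms(1), of "Suc k"] unfolding non_zero_divisor_def by blast
  then have "1 = s * r" by simp
  then show ?thesis by (rule dvdI)
qed

lemma u_Artinian_wrt_non_zero_divisor_imp_unit:
  assumes "u_Artinian_wrt (s :: 'a::comm_ring_1)" and "non_zero_divisor s"
  shows "s dvd 1"
proof -
  define P where "P n = range ((*) (s ^ n))" for n
  have "\<forall>n. submodule_self (P n)" "\<forall>n. P (Suc n) \<subseteq> P n"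
    unfolding P_def using submodule_self_principal principal_power_Suc_subset by blast+
  then obtain k where k: "\<forall>n\<ge>k. (\<lambda>x. s * x) ` P k \<subseteq> P n"
    using assms(1) unfolding u_Artinian_wrt_def by blast
  have "s * s ^ k \<in> (\<lambda>x. s * x) ` P k"
    unfolding P_def by (intro imageI range_eqI[of _ _ 1]) simp
  moreover have "(\<lambda>x. s * x) ` P k \<subseteq> P (Suc (Suc k))"
    using k by simp
  ultimately have "s ^ Suc k \<in> P (Suc (Suc k))"
    by auto
  then have "s ^ Suc (Suc k) dvd s ^ Suc k"
    unfolding P_def by (auto intro: dvdI)
  then show ?thesis
    by (rule non_zero_divisor_power_dvd_imp_unit[OF assms(2)])
qed

lemma u_Artinian_wrt_unit_imp_Artinian_ring:
  assumes "u_Artinian_wrt (s :: 'a::comm_ring_1)" and "s dvd 1"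
  shows "Artinian_ring TYPE('a)"
  unfolding Artinian_ring_def
proof (intro allI impI)
  fix M :: "nat \<Rightarrow> 'a set"
  assume chain: "(\<forall>n. submodule_self (M n)) \<and> (\<forall>n. M (Suc n) \<subseteq> M n)"
  then obtain k where k: "\<forall>n\<ge>k. (\<lambda>x. s * x) ` M k \<subseteq> M n"
    using assms(1) unfolding u_Artinian_wrt_def by blast
  obtain r where r: "1 = s * r"
    using assms(2) by (rule dvdE)
  have "M k \<subseteq> M n" if "k \<le> n" for n
  proof
    fix x assume "x \<in> M k"
    then have "s * x \<in> M n"
      using k that by blast
    then have "r * (s * x) \<in> M n"
      using chain by (simp add: submodule_self_iff)
    moreover have "x = r * (s * x)"
    proof -
      have "x = (s * r) * x"
        by (simp only: r[symmetric] mult_1_left)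
      also have "\<dots> = r * (s * x)"
        by (simp add: mult_ac)
      finally show ?thesis .
    qed
    ultimately show "x \<in> M n" by simp
  qed
  moreover have "M n \<subseteq> M k" if "k \<le> n" for n
    using lift_Suc_antimono_le[of M, OF _ that] chain by blast
  ultimately show "\<exists>k. \<forall>n\<ge>k. M n = M k"
    by blast
qed

theorem proposition3p2:
  fixes S :: "'a::comm_ring_1 set"
  assumes "multiplicative_subset S"
    and "\<forall>s\<in>S. non_zero_divisor s"
    and "u_S_Artinian_ring S"
  shows "Artinian_ring TYPE('a)"
proof -
  obtain s where "s \<in> S" and s: "u_Artinian_wrt s"
    using assms(3) unfolding u_S_Artinian_ring_iff by blast
  then have "s dvd 1"
    using assms(2) by (blast intro: u_Artinian_wrt_non_zero_divisor_imp_unit)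
  with s show ?thesis
    by (rule u_Artinian_wrt_unit_imp_Artinian_ring)
qed

end
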